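(* Let $\mathcal{C}=\langle E,X\rangle$ be a stable configuration structure and $x^\dagger\in X$ a finite configuration. Define $\pi_{x^\dagger}:\mathsf{Pr}(\mathcal{C})\to\{-1,1\}$ by $\pi_{x^\dagger}(p)=-1$ if $p\subseteq x^\dagger$ and $\pi_{x^\dagger}(p)=1$ otherwise. Then $\mathsf{E}(\mathcal{C})[\pi_{x^\dagger}]$ is a polarized event structure.
   Context: A configuration structure is $\mathcal{C}=\langle E,X\rangle$ with $E$ countable and $X\subseteq\mathcal{P}(E)$. It is stable if: $\emptyset\in X$; for all nonempty $x\in X$ there is $a\in x$ with $x\setminus\{a\}\in X$; for all $x,y,z\in X$, $x\cup y\subseteq z$ implies $x\cup y\in X$; $X$ is closed under binary intersection; and for all $x,y,z\in X$, if each of $x\cup y$, $y\cup z$, $x\cup z$ is contained in some element of $X$ then $x\cup y\cup z\in X$. Two configurations $x,y$ are compatible ($x\frown_{\mathcal{C}}y$) if $\{x,y\}$ has a least upper bound in the poset $(X,\subseteq)$. In $(X,\subseteq)$, a set $Y\subseteq X$ is pairwise consistent if $Y\neq\emptyset$ and every two distinct elements of $Y$ have a least upper bound in $(X,\subseteq)$; an element $p\in X$ is a complete prime if for every pairwise consistent $Y$ whose least upper bound $\bigsqcup Y$ exists in $(X,\subseteq)$ and satisfies $p\subseteq\bigsqcup Y$, there is $y\in Y$ with $p\subseteq y$. $\mathsf{Pr}(\mathcal{C})$ is the set of complete primes. A prime event structure is $\mathbb{E}=(E,<,\#)$ with $<$ a partial order (reflexive, antisymmetric, transitive), $\#$ an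 irreflexive symmetric relation, such that $e\#e'<e''$ implies $e\#e''$; its configurations $\mathit{Conf}(\mathbb{E})$ are the subsets of $E$ that are conflict-free and downward closed for $<$. Winskel's construction: $\mathsf{E}(\mathcal{C}):=(\mathsf{Pr}(\mathcal{C}),<,\#)$ with $p<q$ iff $p\subseteq q$ and $p\#q$ iff not $p\frown_{\mathcal{C}}q$ (this is a prime event structure). A polarized event structure $\mathbb{E}[\pi]$ is a prime event structure $\mathbb{E}=(E,<,\#)$ with a map $\pi:E\to\{-1,1\}$ such that $\{e\in E\mid\pi(e)<0\}\in\mathit{Conf}(\mathbb{E})$. *)

theory Defs
  imports "HOL-Library.Countable_Set"
begin

definition config_structure :: "'a set \<Rightarrow> 'a set set \<Rightarrow> bool" where
  "config_structure E X \<longleftrightarrow> countable E \<and> X \<subseteq> Pow E"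

definition stable :: "'a set \<Rightarrow> 'a set set \<Rightarrow> bool" where
  "stable E X \<longleftrightarrow> config_structure E X
     \<and> {} \<in> X
     \<and> (\<forall>x\<in>X. x \<noteq> {} \<longrightarrow> (\<exists>a\<in>x. x - {a} \<in> X))
     \<and> (\<forall>x\<in>X. \<forall>y\<in>X. \<forall>z\<in>X. x \<union> y \<subseteq> z \<longrightarrow> x \<union> y \<in> X)
     \<and> (\<forall>x\<in>X. \<forall>y\<in>X. x \<inter> y \<in> X)
     \<and> (\<forall>x\<in>X. \<forall>y\<in>X. \<forall>z\<in>X.
          (\<exists>w\<in>X. x \<union> y \<subseteq> w) \<and> (\<exists>w\<in>X. y \<union> z \<subseteq> w) \<and> (\<exists>w\<in>X. x \<union> z \<subseteq> w)
          \<longrightarrow> x \<union> y \<union> z \<in> X)"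

definition is_lub :: "'a set set \<Rightarrow> 'a set set \<Rightarrow> 'a set \<Rightarrow> bool" where
  "is_lub X Y z \<longleftrightarrow> z \<in> X \<and> (\<forall>y\<in>Y. y \<subseteq> z) \<and> (\<forall>w\<in>X. (\<forall>y\<in>Y. y \<subseteq> w) \<longrightarrow> z \<subseteq> w)"

definition has_lub :: "'a set set \<Rightarrow> 'a set set \<Rightarrow> bool" where
  "has_lub X Y \<longleftrightarrow> (\<exists>z. is_lub X Y z)"

definition compatible :: "'a set set \<Rightarrow> 'a set \<Rightarrow> 'a set \<Rightarrow> bool" where
  "compatible X x y \<longleftrightarrow> has_lub X {x, y}"

definition pairwise_consistent :: "'a set set \<Rightarrow> 'a set set \<Rightarrow> bool" where
  "pairwise_consistent X Y \<longleftrightarrow> Y \<subseteq> X \<and> Y \<noteq> {} \<and>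
     (\<forall>y1\<in>Y. \<forall>y2\<in>Y. y1 \<noteq> y2 \<longrightarrow> has_lub X {y1, y2})"

definition complete_prime :: "'a set set \<Rightarrow> 'a set \<Rightarrow> bool" where
  "complete_prime X p \<longleftrightarrow> p \<in> X \<and>
     (\<forall>Y z. pairwise_consistent X Y \<longrightarrow> is_lub X Y z \<longrightarrow> p \<subseteq> z \<longrightarrow> (\<exists>y\<in>Y. p \<subseteq> y))"

definition Pr :: "'a set set \<Rightarrow> 'a set set" where
  "Pr X = {p. complete_prime X p}"

text \<open>A prime event structure: carrier, order (reflexive "<" of the paper), conflict.\<close>
type_synonym 'e pes = "'e set \<times> ('e \<Rightarrow> 'e \<Rightarrow> bool) \<times> ('e \<Rightarrow> 'e \<Rightarrow> bool)"

definition prime_es :: "'e pes \<Rightarrow> bool" where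
  "prime_es ES \<longleftrightarrow> (case ES of (Ev, le, cf) \<Rightarrow>
       (\<forall>e\<in>Ev. le e e)
     \<and> (\<forall>e\<in>Ev. \<forall>e'\<in>Ev. le e e' \<and> le e' e \<longrightarrow> e = e')
     \<and> (\<forall>e\<in>Ev. \<forall>e'\<in>Ev. \<forall>e''\<in>Ev. le e e' \<and> le e' e'' \<longrightarrow> le e e'')
     \<and> (\<forall>e\<in>Ev. \<not> cf e e)
     \<and> (\<forall>e\<in>Ev. \<forall>e'\<in>Ev. cf e e' \<longrightarrow> cf e' e)
     \<and> (\<forall>e\<in>Ev. \<forall>e'\<in>Ev. \<forall>e''\<in>Ev. cf e e' \<and> le e' e'' \<longrightarrow> cf e e''))"

definition Conf :: "'e pes \<Rightarrow> 'e set set" where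
  "Conf ES = (case ES of (Ev, le, cf) \<Rightarrow>
     {x. x \<subseteq> Ev \<and> (\<forall>e\<in>x. \<forall>e'\<in>x. \<not> cf e e')
         \<and> (\<forall>e\<in>x. \<forall>e'\<in>Ev. le e' e \<longrightarrow> e' \<in> x)})"

definition winskel_E :: "'a set set \<Rightarrow> 'a set pes" where
  "winskel_E X = (Pr X, (\<lambda>p q. p \<subseteq> q), (\<lambda>p q. \<not> compatible X p q))"

definition polarized_es :: "'e pes \<Rightarrow> ('e \<Rightarrow> int) \<Rightarrow> bool" where
  "polarized_es ES \<pi> \<longleftrightarrow> prime_es ES
     \<and> (\<forall>e\<in>fst ES. \<pi> e \<in> {-1, 1})
     \<and> {e\<in>fst ES. \<pi> e < 0} \<in> Conf ES"

definition polarity :: "'a set \<Rightarrow> 'a set \<Rightarrow> int" where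
  "polarity xd p = (if p \<subseteq> xd then -1 else 1)"

end

theory Submission
  imports Defs
begin

(* In a stable configuration structure two configurations are compatible exactly when they
   have a common upper bound, and then their union is their least upper bound. Hence conflict
   in E(C) is inherited upwards, and the complete primes below x\<dagger> are pairwise compatible
   (bounded by x\<dagger>) and downward closed, i.e. they form a configuration of E(C). *)

lemma compatible_if_bounded:
  assumes "stable E X" "x \<in> X" "y \<in> X" "z \<in> X" "x \<union> y \<subseteq> z"
  shows "compatible X x y"
proof -
  have "x \<union> y \<in> X"
    using assms unfolding stable_def by blast
  then have "is_lub X {x, y} (x \<union> y)"
    unfolding is_lub_def by auto
  then show ?thesis
    unfolding compatible_def has_lub_def by blast
qed

lemma compatible_imp_bounded:
  assumes "compatible X x y"
  obtains z where "z \<in> X" "x \<union> y \<subseteq> z"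
  using assms unfolding compatible_def has_lub_def is_lub_def by auto

lemma compatible_refl: "x \<in> X \<Longrightarrow> compatible X x x"
  unfolding compatible_def has_lub_def is_lub_def by auto

lemma compatible_sym: "compatible X x y \<longleftrightarrow> compatible X y x"
  unfolding compatible_def by (simp add: insert_commute)

lemma compatible_mono:
  assumes "stable E X" "x \<in> X" "y \<in> X" "y' \<in> X" "y \<subseteq> y'" "compatible X x y'"
  shows "compatible X x y"
proof -
  obtain z where "z \<in> X" "x \<union> y' \<subseteq> z"
    using compatible_imp_bounded[OF \<open>compatible X x y'\<close>] .
  then show ?thesis
    using compatible_if_bounded[OF \<open>stable E X\<close> \<open>x \<in> X\<close> \<open>y \<in> X\<close>] \<open>y \<subseteq> y'\<close> by blast
qed

lemma Pr_subset: "Pr X \<subseteq> X"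
  unfolding Pr_def complete_prime_def by auto

lemma prime_es_winskel_E:
  assumes "stable E X"
  shows "prime_es (winskel_E X)"
proof -
  have "compatible X p q"
    if "p \<in> Pr X" "q \<in> Pr X" "r \<in> Pr X" "q \<subseteq> r" "compatible X p r" for p q r
    using that Pr_subset compatible_mono[OF assms, of p q r] by blast
  moreover have "compatible X p p" if "p \<in> Pr X" for p
    using that Pr_subset compatible_refl by blast
  ultimately show ?thesis
    unfolding prime_es_def winskel_E_def by (auto simp: compatible_sym[of X])
qed

lemma primes_below_in_Conf:
  assumes "stable E X" "x \<in> X"
  shows "{p \<in> Pr X. p \<subseteq> x} \<in> Conf (winskel_E X)"
proof -
  have "compatible X p q" if "p \<in> Pr X" "q \<in> Pr X" "p \<subseteq> x" "q \<subseteq> x" for p q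
    using that Pr_subset compatible_if_bounded[OF assms(1) _ _ assms(2), of p q] by blast
  then show ?thesis
    unfolding Conf_def winskel_E_def by auto
qed

theorem mainTheorem6:
  fixes E :: "'a set" and X :: "'a set set" and xd :: "'a set"
  assumes "stable E X" and "xd \<in> X" and "finite xd"
  shows "polarized_es (winskel_E X) (polarity xd)"
proof -
  have "{p \<in> fst (winskel_E X). polarity xd p < 0} = {p \<in> Pr X. p \<subseteq> xd}"
    by (auto simp: winskel_E_def polarity_def)
  then show ?thesis
    using prime_es_winskel_E[OF assms(1)] primes_below_in_Conf[OF assms(1,2)]
    unfolding polarized_es_def by (simp add: polarity_def)
qed

end
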